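(* Let $(G;+,\cdot)$ be a finite field of order $q$. If $n > \max(q,3)$ and $f \colon G^n \to G$ is not affine, then there exists a 2-element subset $I \subseteq \{1,\dots,n\}$ such that the identification minor $f_I$ is not affine.
   Context: A function $f\colon G^n\to G$ is affine over the field if $f(x_1,\dots,x_n) = a_1x_1+\dots+a_nx_n+c$ for some $a_i,c\in G$. Identification minor: for $I=\{i,j\}$, $i<j$, $f_I\colon G^{n-1}\to G$ is $f_I(x_1,\dots,x_{n-1}) = f(x_1,\dots,x_{j-1},x_i,x_j,\dots,x_{n-1})$ (the $i$-th and $j$-th arguments of $f$ are identified). *)

theory Defs
  imports Main
begin

text \<open>An n-ary operation on a set of values is modelled as a function on lists;
only its values on lists of length n matter. Arguments are 0-indexed.\<close>

definition affine_fun :: "nat \<Rightarrow> ('a::field list \<Rightarrow> 'a) \<Rightarrow> bool" where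
  "affine_fun n f \<longleftrightarrow> (\<exists>a::nat \<Rightarrow> 'a. \<exists>c::'a. \<forall>xs. length xs = n \<longrightarrow>
      f xs = (\<Sum>i<n. a i * xs ! i) + c)"

text \<open>Identification minor for I = {i,j}, i < j (0-indexed):
  f_I(y_0,...,y_{n-2}) = f(y_0,...,y_{j-1}, y_i, y_j, ..., y_{n-2}).\<close>
definition ident_minor :: "nat \<Rightarrow> nat \<Rightarrow> ('a list \<Rightarrow> 'a) \<Rightarrow> ('a list \<Rightarrow> 'a)" where
  "ident_minor i j f = (\<lambda>ys. f (take j ys @ [ys ! i] @ drop j ys))"

end

theory Submission
  imports Defs
begin

text \<open>If every identification minor is affine, then \<open>f\<close> is affine on each hyperplane
  \<open>x\<^sub>i = x\<^sub>j\<close>. Evaluating such a representation at the 0/1-vectors supported on at most two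
  coordinates shows that its constant and its coefficients outside \<open>{i, j}\<close> are those of the
  affine interpolant of \<open>f\<close> at \<open>0\<close> and the unit vectors; the sum of the coefficients at \<open>i\<close> and
  \<open>j\<close> is also forced, by comparing with a hyperplane \<open>x\<^sub>k = x\<^sub>l\<close> for a pair disjoint from
  \<open>{i, j}\<close> (here \<open>n \<ge> 4\<close> is used). Hence \<open>f\<close> agrees with its affine interpolant on every such
  hyperplane, and since \<open>n > q\<close>, every point lies on one of them by the pigeonhole principle.\<close>

definition affine_on_diagonal :: "nat \<Rightarrow> nat \<Rightarrow> nat \<Rightarrow> ('a::field list \<Rightarrow> 'a) \<Rightarrow> bool" where
  "affine_on_diagonal n i j f \<longleftrightarrow> (\<exists>b c. \<forall>xs. length xs = n \<longrightarrow> xs ! i = xs ! j \<longrightarrow>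
      f xs = (\<Sum>k<n. b k * xs ! k) + c)"

definition indicator_list :: "nat \<Rightarrow> nat set \<Rightarrow> 'a::zero_neq_one list" where
  "indicator_list n K = map (\<lambda>m. if m \<in> K then 1 else 0) [0..<n]"

definition affine_interpolant :: "nat \<Rightarrow> ('a::field list \<Rightarrow> 'a) \<Rightarrow> 'a list \<Rightarrow> 'a" where
  "affine_interpolant n f xs =
     (\<Sum>m<n. (f (indicator_list n {m}) - f (indicator_list n {})) * xs ! m) + f (indicator_list n {})"

lemma ident_minor_delete_nth:
  assumes "i < j" "j < length xs" "xs ! i = xs ! j"
  shows "ident_minor i j f (take j xs @ drop (Suc j) xs) = f xs"
proof -
  let ?ys = "take j xs @ drop (Suc j) xs"
  have "?ys ! i = xs ! j" using assms by (simp add: nth_append)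
  then have "take j ?ys @ [?ys ! i] @ drop j ?ys = take j xs @ xs ! j # drop (Suc j) xs"
    using assms by simp
  also have "\<dots> = xs" using assms(2) by (rule id_take_nth_drop[symmetric])
  finally show ?thesis by (simp add: ident_minor_def)
qed

lemma sum_delete_nth:
  fixes xs :: "'a::comm_semiring_0 list"
  assumes "j < length xs"
  shows "(\<Sum>k<length xs - 1. a k * (take j xs @ drop (Suc j) xs) ! k)
       = (\<Sum>m<length xs. (if m < j then a m else if m = j then 0 else a (m - 1)) * xs ! m)"
    (is "?lhs = (\<Sum>m<length xs. ?b m * xs ! m)")
proof -
  have "?lhs = (\<Sum>m\<in>{..<length xs} - {j}. ?b m * xs ! m)"
    by (rule sum.reindex_bij_witness[where j="\<lambda>k. if k < j then k else Suc k"
          and i="\<lambda>m. if m < j then m else m - 1"])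
       (use assms in \<open>auto simp: nth_append\<close>)
  also have "\<dots> = (\<Sum>m<length xs. ?b m * xs ! m)"
    using assms by (subst sum.remove[of _ j]) auto
  finally show ?thesis .
qed

lemma affine_on_diagonal_if_ident_minor_affine:
  assumes "i < j" "j < n" "affine_fun (n - 1) (ident_minor i j f)"
  shows "affine_on_diagonal n i j f"
proof -
  obtain a c where a: "\<And>ys. length ys = n - 1 \<Longrightarrow>
      ident_minor i j f ys = (\<Sum>k<n - 1. a k * ys ! k) + c"
    using assms(3) unfolding affine_fun_def by blast
  define b where "b m = (if m < j then a m else if m = j then 0 else a (m - 1))" for m
  have "f xs = (\<Sum>m<n. b m * xs ! m) + c" if "length xs = n" "xs ! i = xs ! j" for xs
  proof -
    have "f xs = ident_minor i j f (take j xs @ drop (Suc j) xs)"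
      using assms that by (simp add: ident_minor_delete_nth)
    also have "\<dots> = (\<Sum>k<n - 1. a k * (take j xs @ drop (Suc j) xs) ! k) + c"
      using assms that by (intro a) simp
    also have "\<dots> = (\<Sum>m<n. b m * xs ! m) + c"
      using assms that sum_delete_nth[of j xs a] by (simp add: b_def)
    finally show ?thesis .
  qed
  then show ?thesis unfolding affine_on_diagonal_def by blast
qed

lemma length_indicator_list [simp]: "length (indicator_list n K) = n"
  by (simp add: indicator_list_def)

lemma nth_indicator_list [simp]: "m < n \<Longrightarrow> indicator_list n K ! m = (if m \<in> K then 1 else 0)"
  by (simp add: indicator_list_def)

lemma sum_mult_indicator_list:
  fixes b :: "nat \<Rightarrow> 'a::semiring_1"
  assumes "K \<subseteq> {..<n}"
  shows "(\<Sum>m<n. b m * indicator_list n K ! m) = sum b K"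
proof -
  have "(\<Sum>m<n. b m * indicator_list n K ! m) = (\<Sum>m<n. if m \<in> K then b m else 0)"
    by (rule sum.cong) auto
  also have "\<dots> = sum b K"
    using assms by (simp add: sum.If_cases Int_absorb1)
  finally show ?thesis .
qed

lemma diagonal_representation_at_indicator_list:
  fixes f :: "'a::field list \<Rightarrow> 'a"
  assumes f: "\<And>xs. length xs = n \<Longrightarrow> xs ! i = xs ! j \<Longrightarrow> f xs = (\<Sum>k<n. b k * xs ! k) + c"
    and "i < n" "j < n" "K \<subseteq> {..<n}" "i \<in> K \<longleftrightarrow> j \<in> K"
  shows "f (indicator_list n K) = sum b K + c"
  using assms f[of "indicator_list n K"] sum_mult_indicator_list[of K n b] by simp

lemma diagonal_representation_coeffs:
  fixes f :: "'a::field list \<Rightarrow> 'a"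
  assumes f: "\<And>xs. length xs = n \<Longrightarrow> xs ! i = xs ! j \<Longrightarrow> f xs = (\<Sum>k<n. b k * xs ! k) + c"
    and "i < n" "j < n" "i \<noteq> j"
  shows "c = f (indicator_list n {})"
    and "\<And>k. k < n \<Longrightarrow> k \<notin> {i, j} \<Longrightarrow> b k = f (indicator_list n {k}) - f (indicator_list n {})"
    and "b i + b j = f (indicator_list n {i, j}) - f (indicator_list n {})"
proof -
  note at = diagonal_representation_at_indicator_list[OF f, OF _ _ assms(2,3)]
  show c: "c = f (indicator_list n {})"
    using at[of "{}"] by simp
  show "b k = f (indicator_list n {k}) - f (indicator_list n {})" if "k < n" "k \<notin> {i, j}" for k
    using at[of "{k}"] c that by simp
  show "b i + b j = f (indicator_list n {i, j}) - f (indicator_list n {})"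
    using at[of "{i, j}"] c assms(2-4) by simp
qed

lemma exists_pair_avoiding:
  fixes i j n :: nat
  assumes "4 \<le> n"
  obtains k l where "k < l" "l < n" "k \<notin> {i, j}" "l \<notin> {i, j}"
proof -
  have "\<exists>k l :: nat. k < l \<and> l < 4 \<and> k \<noteq> i \<and> k \<noteq> j \<and> l \<noteq> i \<and> l \<noteq> j"
    by presburger
  with assms that show thesis by auto
qed

lemma sum_mult_eq_if_agree_off_pair:
  fixes a b x :: "nat \<Rightarrow> 'a::comm_ring"
  assumes "i < n" "j < n" "i \<noteq> j" "x i = x j" "b i + b j = a i + a j"
    and "\<And>m. m < n \<Longrightarrow> m \<notin> {i, j} \<Longrightarrow> b m = a m"
  shows "(\<Sum>m<n. b m * x m) = (\<Sum>m<n. a m * x m)"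
proof -
  have "(\<Sum>m<n. (b m - a m) * x m)
      = (\<Sum>m<n. (if m = i then (b i - a i) * x i else 0) + (if m = j then (b j - a j) * x j else 0))"
    using assms by (intro sum.cong) auto
  also have "\<dots> = (b i - a i) * x i + (b j - a j) * x j"
    using assms by (simp add: sum.distrib)
  also have "\<dots> = ((b i + b j) - (a i + a j)) * x i"
    using assms(4) by (simp add: algebra_simps)
  finally have "(\<Sum>m<n. (b m - a m) * x m) = 0"
    using assms(5) by simp
  then show ?thesis
    by (simp add: algebra_simps sum_subtractf)
qed

lemma eq_affine_interpolant_on_diagonal:
  fixes f :: "'a::field list \<Rightarrow> 'a"
  assumes diag: "\<And>i j. i < j \<Longrightarrow> j < n \<Longrightarrow> affine_on_diagonal n i j f"
    and "4 \<le> n" "i < j" "j < n" "length xs = n" "xs ! i = xs ! j"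
  shows "f xs = affine_interpolant n f xs"
proof -
  define a where "a m = f (indicator_list n {m}) - f (indicator_list n {})" for m
  obtain b c where f: "\<And>xs. length xs = n \<Longrightarrow> xs ! i = xs ! j \<Longrightarrow> f xs = (\<Sum>m<n. b m * xs ! m) + c"
    using diag[OF assms(3,4)] unfolding affine_on_diagonal_def by blast
  obtain k l where kl: "k < l" "l < n" "k \<notin> {i, j}" "l \<notin> {i, j}"
    using assms(2) by (rule exists_pair_avoiding)
  obtain b' c' where f': "\<And>xs. length xs = n \<Longrightarrow> xs ! k = xs ! l \<Longrightarrow> f xs = (\<Sum>m<n. b' m * xs ! m) + c'"
    using diag[OF kl(1,2)] unfolding affine_on_diagonal_def by blast
  note coeffs = diagonal_representation_coeffs[OF f] and coeffs' = diagonal_representation_coeffs[OF f']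
  have "f (indicator_list n {i, j}) = b' i + b' j + c'"
    using diagonal_representation_at_indicator_list[OF f', where K = "{i, j}"] assms kl by simp
  also have "\<dots> = a i + a j + f (indicator_list n {})"
    using coeffs' assms kl by (simp add: a_def)
  finally have "b i + b j = a i + a j"
    using coeffs(3) assms by simp
  then have "(\<Sum>m<n. b m * xs ! m) = (\<Sum>m<n. a m * xs ! m)"
    using assms coeffs(2) by (intro sum_mult_eq_if_agree_off_pair) (auto simp: a_def)
  with f[OF assms(5,6)] coeffs(1) assms show ?thesis
    by (simp add: affine_interpolant_def a_def)
qed

lemma exists_repeated_nth:
  assumes "card (UNIV :: 'a::finite set) < length (xs :: 'a list)"
  obtains i j where "i < j" "j < length xs" "xs ! i = xs ! j"
proof -
  have "\<not> distinct xs"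
    using assms distinct_card[of xs] card_mono[of UNIV "set xs"] by auto
  then obtain i j where "i < length xs" "j < length xs" "i \<noteq> j" "xs ! i = xs ! j"
    by (auto simp: distinct_conv_nth)
  then show thesis
    using that by (cases "i < j") (auto simp: not_less_iff_gr_or_eq)
qed

theorem mainTheorem13:
  fixes f :: "'a::{field,finite} list \<Rightarrow> 'a" and n :: nat
  assumes "n > max (card (UNIV :: 'a set)) 3"
    and "\<not> affine_fun n f"
  shows "\<exists>i j. i < j \<and> j < n \<and> \<not> affine_fun (n - 1) (ident_minor i j f)"
proof (rule ccontr)
  assume "\<not> ?thesis"
  then have diag: "affine_on_diagonal n i j f" if "i < j" "j < n" for i j
    using that affine_on_diagonal_if_ident_minor_affine by blast
  have "\<forall>xs. length xs = n \<longrightarrow> f xs = affine_interpolant n f xs"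
  proof (intro allI impI)
    fix xs :: "'a list"
    assume "length xs = n"
    then have "card (UNIV :: 'a set) < length xs"
      using assms(1) by simp
    then obtain i j where "i < j" "j < length xs" "xs ! i = xs ! j"
      by (rule exists_repeated_nth)
    moreover have "4 \<le> n"
      using assms(1) by simp
    ultimately show "f xs = affine_interpolant n f xs"
      using \<open>length xs = n\<close> by (intro eq_affine_interpolant_on_diagonal[of n f i j] diag) simp_all
  qed
  then have "affine_fun n f"
    unfolding affine_fun_def affine_interpolant_def by (intro exI) assumption
  with assms(2) show False ..
qed

end
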